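(* Let $(x_0,y_0)\in\{(\tfrac{\pi}{4},-\tfrac{3\pi}{4}),\,(\tfrac{3\pi}{4},-\tfrac{\pi}{4})\}$ and let $U\subset\mathbb{R}^2$ be an open neighborhood of $(x_0,y_0)$. Let $\mathcal{A},\mathcal{B}:U\to[-1,1]$ be functions that are differentiable at $(x_0,y_0)$ and satisfy $\mathcal{A}(x_0,y_0)=\mathcal{B}(x_0,y_0)=0$ and $\nabla(\mathcal{A}-\mathcal{B})(x_0,y_0)\neq 0$ (i.e. $(x_0,y_0)$ is not a critical point of $\mathcal{A}-\mathcal{B}$). For $(x,y)\in\mathbb{R}^2$ put $C(x,y)=-\cos(x-y)$. Then there exist real numbers $\mu\neq 0$, $\nu\neq 0$ and $\epsilon_0>0$ such that for every $\epsilon\in(0,\epsilon_0)$, at the point $(x,y)=(x_0+\mu\epsilon,\,y_0+\nu\epsilon)$ at least one of the two inequalities $$|C(x,y)+\mathcal{A}(x,y)|+|\mathcal{B}(x,y)-C(x,y)|\le 2,\qquad |C(x,y)-\mathcal{A}(x,y)|+|\mathcal{B}(x,y)+C(x,y)|\le 2$$ is false.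
   Context: Physical interpretation (not needed for the mathematics): $(x,y)=(\theta_{\bm a},\theta_{\bm b})$ parametrizes quadruplets of measurement directions in a plane with $\theta_{\bm a'}=-\theta_{\bm a}$, $\theta_{\bm b'}=-\theta_{\bm b}$; $C$ is the quantum correlation $\langle a,b\rangle=\langle a',b'\rangle=-\cos(\theta_{\bm a}-\theta_{\bm b})$, $\mathcal{A}=\langle a,a'\rangle$, $\mathcal{B}=\langle b,b'\rangle$, and the two displayed inequalities are the "Boole inequalities" $|\langle a,b\rangle\pm\langle a,a'\rangle|+|\langle b',b\rangle\mp\langle b',a'\rangle|\le 2$, which hold for correlations of $\{-1,1\}$-valued sequences. The conclusion thus says that these assumptions on $\mathcal{A},\mathcal{B}$ are incompatible with the Boole inequalities. *)

theory Defs
  imports "HOL-Analysis.Analysis"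
begin

definition Corr :: "real \<Rightarrow> real \<Rightarrow> real" where
  "Corr x y = - cos (x - y)"

end

theory Submission
  imports Defs
begin

(* Adding the two Boole inequalities in the right way, the triangle
   inequality gives |A - B| <= 2 - 2C, independently of any bound on A and B
   (lemma boole_pair_bounds_difference).  At the two base points x0 - y0 = pi,
   so along the line (x0 + mu*e, y0 + nu*e) the correlation equals cos((mu - nu)*e),
   whence 2 - 2C vanishes to second order at e = 0.  On the other hand, if the
   direction (mu, nu) is chosen with both coordinates nonzero and not in the kernel
   of the derivative of A - B (lemma linear_nonvanishing_direction), then A - B
   restricted to the line has a nonzero derivative at e = 0
   (lemma has_field_derivative_along_line) and hence grows linearly.  A function
   with nonzero derivative eventually dominates a function with zero derivative
   (lemma eventually_flat_less_abs), and the line stays inside U for small e > 0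
   (lemma eventually_ray_in_open), so for all small e > 0 we get
   2 - 2C < |A - B|, and the Boole inequalities cannot both hold. *)

lemma boole_pair_bounds_difference:
  fixes a b c :: real
  assumes "\<bar>c + a\<bar> + \<bar>b - c\<bar> \<le> 2" and "\<bar>c - a\<bar> + \<bar>b + c\<bar> \<le> 2"
  shows "\<bar>a - b\<bar> \<le> 2 - 2 * c"
proof -
  have "a - b + 2 * c \<le> \<bar>c + a\<bar> + \<bar>b - c\<bar>" by linarith
  moreover have "b - a + 2 * c \<le> \<bar>c - a\<bar> + \<bar>b + c\<bar>" by linarith
  ultimately show ?thesis using assms by linarith
qed

lemma Corr_along_antipodal_line:
  assumes "x0 - y0 = pi"
  shows "Corr (x0 + \<mu> * e) (y0 + \<nu> * e) = cos ((\<mu> - \<nu>) * e)"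
proof -
  have "x0 + \<mu> * e - (y0 + \<nu> * e) = pi + (\<mu> - \<nu>) * e"
    using assms by (simp add: algebra_simps)
  then show ?thesis unfolding Corr_def by (simp add: cos_add)
qed

lemma linear_nonvanishing_direction:
  fixes L :: "real \<times> real \<Rightarrow> real"
  assumes lin: "linear L" and nonzero: "L \<noteq> (\<lambda>h. 0)"
  obtains \<mu> \<nu> where "\<mu> \<noteq> 0" "\<nu> \<noteq> 0" "L (\<mu>, \<nu>) \<noteq> 0"
proof -
  define a b where "a = L (1, 0)" and "b = L (0, 1)"
  have L_coords: "L (h1, h2) = h1 * a + h2 * b" for h1 h2
  proof -
    have "L (h1, h2) = L (h1 *\<^sub>R (1, 0) + h2 *\<^sub>R (0, 1))" by simp
    also have "\<dots> = h1 * a + h2 * b"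
      unfolding a_def b_def by (simp only: linear_add[OF lin] linear_scale[OF lin]) simp
    finally show ?thesis .
  qed
  have "a \<noteq> 0 \<or> b \<noteq> 0"
    using nonzero by (auto simp: fun_eq_iff L_coords)
  then show ?thesis
    using that[of 1 1] that[of 1 2] by (cases "a + b = 0") (auto simp: L_coords)
qed

lemma has_field_derivative_along_line:
  fixes f :: "'a::real_normed_vector \<Rightarrow> real"
  assumes "(f has_derivative L) (at p)"
  shows "((\<lambda>t. f (p + t *\<^sub>R v)) has_field_derivative L v) (at 0)"
proof -
  have line: "((\<lambda>t. p + t *\<^sub>R v) has_derivative (\<lambda>t. t *\<^sub>R v)) (at 0)"
    by (auto intro!: derivative_eq_intros)
  have "(f has_derivative L) (at ((\<lambda>t::real. p + t *\<^sub>R v) 0))"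
    using assms by simp
  from has_derivative_compose[OF line this]
  have "((\<lambda>t. f (p + t *\<^sub>R v)) has_derivative (\<lambda>t. L (t *\<^sub>R v))) (at 0)"
    by (simp add: o_def)
  moreover have "(\<lambda>t. L (t *\<^sub>R v)) = (*) (L v)"
    using linear_scale[OF has_derivative_linear[OF assms]] by (auto simp: fun_eq_iff)
  ultimately show ?thesis by (simp add: has_field_derivative_def)
qed

lemma eventually_flat_less_abs:
  fixes g h :: "real \<Rightarrow> real"
  assumes g_der: "(g has_field_derivative D) (at 0)" and "D \<noteq> 0" and "g 0 = 0"
    and h_der: "(h has_field_derivative 0) (at 0)" and "h 0 = 0"
  shows "eventually (\<lambda>e. h e < \<bar>g e\<bar>) (at_right 0)"
proof -
  have "((\<lambda>e. g e / e) \<longlongrightarrow> D) (at 0)" "((\<lambda>e. h e / e) \<longlongrightarrow> 0) (at 0)"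
    using has_field_derivative_iff[THEN iffD1, OF g_der]
      has_field_derivative_iff[THEN iffD1, OF h_der] assms by simp_all
  then have "((\<lambda>e. \<bar>g e / e\<bar> - h e / e) \<longlongrightarrow> \<bar>D\<bar> - 0) (at_right 0)"
    by (intro tendsto_intros) (auto intro: tendsto_mono[OF at_le])
  then have "eventually (\<lambda>e. 0 < \<bar>g e / e\<bar> - h e / e) (at_right 0)"
    using \<open>D \<noteq> 0\<close> by (intro order_tendstoD) auto
  moreover have "eventually (\<lambda>e. 0 < e) (at_right (0::real))"
    by (simp add: eventually_at_right_less)
  ultimately show ?thesis
    by eventually_elim (simp add: field_simps)
qed

lemma eventually_ray_in_open:
  fixes p v :: "'a::real_normed_vector"
  assumes "open U" and "p \<in> U"
  shows "eventually (\<lambda>t. p + t *\<^sub>R v \<in> U) (at_right 0)"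
proof -
  have "((\<lambda>t. p + t *\<^sub>R v) \<longlongrightarrow> p) (at 0)"
    by (auto intro!: tendsto_eq_intros)
  then have "eventually (\<lambda>t. p + t *\<^sub>R v \<in> U) (at 0)"
    using assms by (rule topological_tendstoD)
  then show ?thesis by (rule filter_leD[OF at_le, rotated]) simp
qed

theorem claim2:
  fixes x0 y0 :: real and U :: "(real \<times> real) set"
    and A B :: "real \<times> real \<Rightarrow> real"
  assumes pt: "(x0, y0) \<in> {(pi/4, -3*pi/4), (3*pi/4, -pi/4)}"
    and U_open: "open U" and in_U: "(x0, y0) \<in> U"
    and A_range: "\<forall>p\<in>U. A p \<in> {-1..1}"
    and B_range: "\<forall>p\<in>U. B p \<in> {-1..1}"
    and A_diff: "A differentiable (at (x0, y0))"
    and B_diff: "B differentiable (at (x0, y0))"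
    and A0: "A (x0, y0) = 0" and B0: "B (x0, y0) = 0"
    and noncrit: "frechet_derivative (\<lambda>p. A p - B p) (at (x0, y0)) \<noteq> (\<lambda>h. 0)"
  shows "\<exists>\<mu> \<nu> \<epsilon>0. \<mu> \<noteq> 0 \<and> \<nu> \<noteq> 0 \<and> \<epsilon>0 > 0 \<and>
    (\<forall>\<epsilon>. 0 < \<epsilon> \<and> \<epsilon> < \<epsilon>0 \<longrightarrow>
      (let x = x0 + \<mu> * \<epsilon>; y = y0 + \<nu> * \<epsilon> in
        (x, y) \<in> U \<and>
        \<not> (\<bar>Corr x y + A (x, y)\<bar> + \<bar>B (x, y) - Corr x y\<bar> \<le> 2 \<and>
             \<bar>Corr x y - A (x, y)\<bar> + \<bar>B (x, y) + Corr x y\<bar> \<le> 2)))"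
proof -
  define L where "L = frechet_derivative (\<lambda>p. A p - B p) (at (x0, y0))"
  have L_der: "((\<lambda>p. A p - B p) has_derivative L) (at (x0, y0))"
    unfolding L_def using differentiable_diff[OF A_diff B_diff] frechet_derivative_works by blast
  obtain \<mu> \<nu> where \<mu>\<nu>: "\<mu> \<noteq> 0" "\<nu> \<noteq> 0" "L (\<mu>, \<nu>) \<noteq> 0"
    using linear_nonvanishing_direction has_derivative_linear[OF L_der] noncrit L_def by blast
  define line where "line e = (x0, y0) + e *\<^sub>R (\<mu>, \<nu>)" for e
  have line_eq: "line e = (x0 + \<mu> * e, y0 + \<nu> * e)" for e
    by (simp add: line_def mult.commute)
  have "((\<lambda>e. A (line e) - B (line e)) has_field_derivative L (\<mu>, \<nu>)) (at 0)"
    unfolding line_def by (rule has_field_derivative_along_line[OF L_der])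
  moreover have "((\<lambda>e. 2 - 2 * cos ((\<mu> - \<nu>) * e)) has_field_derivative 0) (at 0)"
    by (auto intro!: derivative_eq_intros)
  ultimately have "eventually (\<lambda>e. 2 - 2 * cos ((\<mu> - \<nu>) * e) < \<bar>A (line e) - B (line e)\<bar>) (at_right 0)"
    using \<mu>\<nu> A0 B0 by (intro eventually_flat_less_abs[where D = "L (\<mu>, \<nu>)"]) (auto simp: line_def)
  moreover have "eventually (\<lambda>e. line e \<in> U) (at_right 0)"
    unfolding line_def using U_open in_U by (rule eventually_ray_in_open)
  ultimately have "eventually (\<lambda>e. line e \<in> U \<and>
      2 - 2 * cos ((\<mu> - \<nu>) * e) < \<bar>A (line e) - B (line e)\<bar>) (at_right 0)"
    by eventually_elim auto
  then obtain \<epsilon>0 where "\<epsilon>0 > 0" and small: "\<And>e. 0 < e \<Longrightarrow> e < \<epsilon>0 \<Longrightarrow> line e \<in> U \<and>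
      2 - 2 * cos ((\<mu> - \<nu>) * e) < \<bar>A (line e) - B (line e)\<bar>"
    unfolding eventually_at_right_field by auto
  have antipodal: "x0 - y0 = pi" using pt by auto
  show ?thesis
  proof (rule exI[of _ \<mu>], rule exI[of _ \<nu>], rule exI[of _ \<epsilon>0], intro conjI allI impI)
    fix e :: real
    assume "0 < e \<and> e < \<epsilon>0"
    then have line_in_U: "line e \<in> U"
      and gap: "2 - 2 * cos ((\<mu> - \<nu>) * e) < \<bar>A (line e) - B (line e)\<bar>"
      using small by auto
    have "Corr (x0 + \<mu> * e) (y0 + \<nu> * e) = cos ((\<mu> - \<nu>) * e)"
      using Corr_along_antipodal_line[OF antipodal] .
    then show "let x = x0 + \<mu> * e; y = y0 + \<nu> * e in (x, y) \<in> U \<and>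
        \<not> (\<bar>Corr x y + A (x, y)\<bar> + \<bar>B (x, y) - Corr x y\<bar> \<le> 2 \<and>
             \<bar>Corr x y - A (x, y)\<bar> + \<bar>B (x, y) + Corr x y\<bar> \<le> 2)"
      using line_in_U gap boole_pair_bounds_difference[where a = "A (line e)" and b = "B (line e)"
          and c = "cos ((\<mu> - \<nu>) * e)"]
      unfolding Let_def line_eq by auto
  qed (use \<mu>\<nu> \<open>\<epsilon>0 > 0\<close> in auto)
qed

end
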